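(* In the setting described in the context, for every $\gamma \in (0,\frac12)$ and every $\lambda_0 > 1$, \[\hat\Sigma = \bigcup_{0 \leq k \leq q} F_k \;\cup \bigcup_{0 \leq j < k \leq q} E_{j,k} \;\cup \bigcup_{0 \leq i < j < k \leq q} G_{i,j,k}.\]
   Context: $n\ge3$; $u_0,\dots,u_q$ are non-constant linear (affine) functions on $\mathbb{R}^n$ and $\Omega=\bigcap_{m=0}^q\{u_m\le 0\}$ is a compact convex polytope with non-empty interior. Fix a smooth even $\eta:\mathbb{R}\to\mathbb{R}$ with $\eta(t)=|t|$ for $|t|\ge\frac12$ and $\eta''\ge0$. For $\gamma\in(0,\frac12)$, $\lambda_0>1$ put $\lambda_k=\gamma^{-k}\lambda_0$ ($1\le k\le q$), $\hat u_0=u_0$, $\hat u_k=\frac12\big(\hat u_{k-1}+u_k+\lambda_k^{-1}\eta(\lambda_k(\hat u_{k-1}-u_k))\big)$, and $\hat\Sigma=\{\hat u_q=0\}$. Write $P_m=\{\hat u_{m-1}-u_m>\lambda_m^{-1}\}$, with empty intersections of such sets equal to $\mathbb{R}^n$. Define: $F_0=\hat\Sigma\cap\bigcap_{m=1}^q P_m$; for $1\le k\le q$, $F_k=\hat\Sigma\cap\bigcap_{m=k+1}^q P_m\cap\{\hat u_{k-1}-u_k<-\lambda_k^{-1}\}$. For $1\le k\le q$, $E_{0,k}=\hat\Sigma\cap\bigcap_{m=k+1}^q P_m\cap\bigcap_{m=1}^{k-1}P_m\cap\{-2\lambda_k^{-1}\le\hat u_{k-1}\le0\}\cap\{-2\lambda_k^{-1}\le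 u_k\le0\}\cap\{-2\lambda_k^{-1}\le u_0\le0\}$. For $1\le j<k\le q$, $E_{j,k}=\hat\Sigma\cap\bigcap_{m=k+1}^q P_m\cap\bigcap_{m=j+1}^{k-1}P_m\cap\{-2\lambda_k^{-1}\le\hat u_{k-1}\le0\}\cap\{-2\lambda_k^{-1}\le u_k\le0\}\cap\{-2\lambda_k^{-1}\le u_j\le0\}\cap\{\hat u_{j-1}-u_j<-\lambda_j^{-1}\}$. For $0\le i<j<k\le q$, $G_{i,j,k}=\hat\Sigma\cap\bigcap_{m=k+1}^q P_m\cap\bigcap_{m=j+1}^{k-1}P_m\cap\{-2\lambda_k^{-1}\le\hat u_{k-1}\le0\}\cap\{-2\lambda_k^{-1}\le u_k\le0\}\cap\{-4\lambda_j^{-1}\le u_j\le0\}\cap\{-6\lambda_i^{-1}\le u_i\le0\}$. *)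

theory Defs
  imports "HOL-Analysis.Analysis"
begin

definition smooth_real :: "(real \<Rightarrow> real) \<Rightarrow> bool" where
  "smooth_real f \<longleftrightarrow> (\<forall>k x. (deriv ^^ k) f differentiable (at x))"

definition lam :: "real \<Rightarrow> real \<Rightarrow> nat \<Rightarrow> real" where
  "lam \<gamma> lam0 k = lam0 / \<gamma> ^ k"

fun uhat :: "(real \<Rightarrow> real) \<Rightarrow> (nat \<Rightarrow> real) \<Rightarrow> (nat \<Rightarrow> 'a \<Rightarrow> real) \<Rightarrow> nat \<Rightarrow> 'a \<Rightarrow> real" where
  "uhat \<eta> L u 0 x = u 0 x"
| "uhat \<eta> L u (Suc k) x =
     (uhat \<eta> L u k x + u (Suc k) x
       + \<eta> (L (Suc k) * (uhat \<eta> L u k x - u (Suc k) x)) / L (Suc k)) / 2"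

definition hatSigma :: "(nat \<Rightarrow> 'a \<Rightarrow> real) \<Rightarrow> nat \<Rightarrow> 'a set" where
  "hatSigma uh q = {x. uh q x = 0}"

definition Pset :: "(nat \<Rightarrow> 'a \<Rightarrow> real) \<Rightarrow> (nat \<Rightarrow> 'a \<Rightarrow> real) \<Rightarrow> (nat \<Rightarrow> real) \<Rightarrow> nat \<Rightarrow> 'a set" where
  "Pset uh u L m = {x. uh (m - 1) x - u m x > 1 / L m}"

definition Fset :: "(nat \<Rightarrow> 'a \<Rightarrow> real) \<Rightarrow> (nat \<Rightarrow> 'a \<Rightarrow> real) \<Rightarrow> (nat \<Rightarrow> real) \<Rightarrow> nat \<Rightarrow> nat \<Rightarrow> 'a set" where
  "Fset uh u L q k =
    (if k = 0 then hatSigma uh q \<inter> (\<Inter>m\<in>{1..q}. Pset uh u L m)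
     else hatSigma uh q \<inter> (\<Inter>m\<in>{k+1..q}. Pset uh u L m)
          \<inter> {x. uh (k - 1) x - u k x < - 1 / L k})"

definition Eset :: "(nat \<Rightarrow> 'a \<Rightarrow> real) \<Rightarrow> (nat \<Rightarrow> 'a \<Rightarrow> real) \<Rightarrow> (nat \<Rightarrow> real) \<Rightarrow> nat \<Rightarrow> nat \<Rightarrow> nat \<Rightarrow> 'a set" where
  "Eset uh u L q j k =
    (if j = 0 then
       hatSigma uh q \<inter> (\<Inter>m\<in>{k+1..q}. Pset uh u L m) \<inter> (\<Inter>m\<in>{1..k-1}. Pset uh u L m)
       \<inter> {x. - 2 / L k \<le> uh (k - 1) x \<and> uh (k - 1) x \<le> 0}
       \<inter> {x. - 2 / L k \<le> u k x \<and> u k x \<le> 0}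
       \<inter> {x. - 2 / L k \<le> u 0 x \<and> u 0 x \<le> 0}
     else
       hatSigma uh q \<inter> (\<Inter>m\<in>{k+1..q}. Pset uh u L m) \<inter> (\<Inter>m\<in>{j+1..k-1}. Pset uh u L m)
       \<inter> {x. - 2 / L k \<le> uh (k - 1) x \<and> uh (k - 1) x \<le> 0}
       \<inter> {x. - 2 / L k \<le> u k x \<and> u k x \<le> 0}
       \<inter> {x. - 2 / L k \<le> u j x \<and> u j x \<le> 0}
       \<inter> {x. uh (j - 1) x - u j x < - 1 / L j})"

definition Gset :: "(nat \<Rightarrow> 'a \<Rightarrow> real) \<Rightarrow> (nat \<Rightarrow> 'a \<Rightarrow> real) \<Rightarrow> (nat \<Rightarrow> real) \<Rightarrow> nat \<Rightarrow> nat \<Rightarrow> nat \<Rightarrow> nat \<Rightarrow> 'a set" where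
  "Gset uh u L q i j k =
       hatSigma uh q \<inter> (\<Inter>m\<in>{k+1..q}. Pset uh u L m) \<inter> (\<Inter>m\<in>{j+1..k-1}. Pset uh u L m)
       \<inter> {x. - 2 / L k \<le> uh (k - 1) x \<and> uh (k - 1) x \<le> 0}
       \<inter> {x. - 2 / L k \<le> u k x \<and> u k x \<le> 0}
       \<inter> {x. - 4 / L j \<le> u j x \<and> u j x \<le> 0}
       \<inter> {x. - 6 / L i \<le> u i x \<and> u i x \<le> 0}"

end

theory Submission
  imports Defs
begin

(* Each step of the recursion is a smoothed maximum: hat u_k lies between
   max (hat u_(k-1)) u_k and that maximum plus 1/(4 lambda_k), and equals the maximum as
   soon as the two arguments are 1/(2 lambda_k) apart.  Given x with hat u_q x = 0, go down
   from q while x lies in P_m; along the way hat u stays 0.  At the first failure k, either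
   k = 0 or u_k dominates (F_k), or hat u_(k-1) and u_k are 1/lambda_k-close and hence both
   within 2/lambda_k of 0.  Descending again through the P_m below k, the next failure j
   gives E_(j,k) when j = 0 or u_j dominates; otherwise hat u_(j-1) and u_j are close at
   scale 1/lambda_j, and since lambda at least doubles at each step some u_i with i < j is
   within 3/lambda_i of 0, which gives G_(i,j,k). *)

lemma smooth_real_convex_on:
  assumes "smooth_real f" and "\<And>t. 0 \<le> (deriv ^^ 2) f t"
  shows "convex_on UNIV f"
proof (rule f''_ge0_imp_convex[where f'="deriv f" and f''="deriv (deriv f)"])
  fix x :: real
  have "(deriv ^^ 0) f differentiable (at x)" "(deriv ^^ 1) f differentiable (at x)"
    using assms(1) unfolding smooth_real_def by blast+
  then show "(f has_real_derivative deriv f x) (at x)"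
    and "(deriv f has_real_derivative deriv (deriv f) x) (at x)"
    by (simp_all add: DERIV_deriv_iff_real_differentiable)
  show "0 \<le> deriv (deriv f) x"
    using assms(2)[of x] by (simp add: numeral_2_eq_2)
qed auto

lemma convex_eq_abs_outside_ge_abs:
  fixes f :: "real \<Rightarrow> real"
  assumes f: "convex_on UNIV f" and abs_outside: "\<And>t. 1/2 \<le> \<bar>t\<bar> \<Longrightarrow> f t = \<bar>t\<bar>"
  shows "\<bar>t\<bar> \<le> f t"
proof -
  have "t \<le> f t" if "t < 1/2" for t
    using convex_on_slope_le(2)[OF f, of t 1 "1/2"] that abs_outside[of 1] abs_outside[of "1/2"]
    by (simp add: divide_le_eq)
  moreover have "- t \<le> f t" if "- 1/2 < t" for t
    using convex_on_slope_le(1)[OF f, of "-1" t "-1/2"] that abs_outside[of "-1"] abs_outside[of "-1/2"]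
    by (simp add: le_divide_eq)
  ultimately show ?thesis
    using abs_outside[of t] by (cases "1/2 \<le> \<bar>t\<bar>") (auto simp: abs_if)
qed

lemma convex_eq_abs_outside_le_max:
  fixes f :: "real \<Rightarrow> real"
  assumes f: "convex_on UNIV f" and abs_outside: "\<And>t. 1/2 \<le> \<bar>t\<bar> \<Longrightarrow> f t = \<bar>t\<bar>"
  shows "f t \<le> max \<bar>t\<bar> (1/2)"
proof (cases "1/2 \<le> \<bar>t\<bar>")
  case False
  have "f t \<le> max (f (-1/2)) (f (1/2))"
    using False by (intro convex_on_le_max convex_on_subset[OF f]) auto
  then show ?thesis
    using abs_outside[of "-1/2"] abs_outside[of "1/2"] by simp
qed (use abs_outside in simp)

lemma max_eq_half_sum_abs:
  fixes a b :: "'a::linordered_field"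
  shows "max a b = (a + b + \<bar>a - b\<bar>) / 2"
  by (simp add: max_def abs_if field_simps)

definition soft_max :: "(real \<Rightarrow> real) \<Rightarrow> real \<Rightarrow> real \<Rightarrow> real \<Rightarrow> real" where
  "soft_max \<eta> l a b = (a + b + \<eta> (l * (a - b)) / l) / 2"

lemma max_le_soft_max:
  assumes "\<And>t. \<bar>t\<bar> \<le> \<eta> t" and "0 < l"
  shows "max a b \<le> soft_max \<eta> l a b"
proof -
  have "\<bar>a - b\<bar> \<le> \<eta> (l * (a - b)) / l"
    using assms(1)[of "l * (a - b)"] \<open>0 < l\<close> by (simp add: abs_mult pos_le_divide_eq mult.commute)
  then show ?thesis
    unfolding soft_max_def max_eq_half_sum_abs by (intro divide_right_mono add_left_mono) simp_all
qed

lemma soft_max_le_max: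
  assumes "\<And>t. \<eta> t \<le> max \<bar>t\<bar> (1/2)" and "0 < l"
  shows "soft_max \<eta> l a b \<le> max a b + inverse l / 4"
proof -
  have "\<eta> (l * (a - b)) \<le> max (l * \<bar>a - b\<bar>) (1/2)"
    using assms(1)[of "l * (a - b)"] \<open>0 < l\<close> by (simp add: abs_mult)
  also have "\<dots> \<le> l * \<bar>a - b\<bar> + 1/2"
    using \<open>0 < l\<close> by simp
  finally have "\<eta> (l * (a - b)) / l \<le> \<bar>a - b\<bar> + inverse l / 2"
    using \<open>0 < l\<close> by (simp add: pos_divide_le_eq field_simps)
  then show ?thesis
    unfolding soft_max_def max_eq_half_sum_abs by (simp add: field_simps)
qed

lemma soft_max_eq_max:
  assumes "\<And>t. 1/2 \<le> \<bar>t\<bar> \<Longrightarrow> \<eta> t = \<bar>t\<bar>" and "0 < l" and "inverse l / 2 \<le> \<bar>a - b\<bar>"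
  shows "soft_max \<eta> l a b = max a b"
proof -
  have "1/2 = l * (inverse l / 2)"
    using \<open>0 < l\<close> by simp
  also have "\<dots> \<le> l * \<bar>a - b\<bar>"
    using assms(2,3) by (intro mult_left_mono) simp_all
  finally have "\<eta> (l * (a - b)) = l * \<bar>a - b\<bar>"
    using assms(1)[of "l * (a - b)"] \<open>0 < l\<close> by (simp add: abs_mult)
  then show ?thesis
    unfolding soft_max_def max_eq_half_sum_abs using \<open>0 < l\<close> by simp
qed

lemma uhat_Suc_soft_max:
  "uhat \<eta> L u (Suc k) x = soft_max \<eta> (L (Suc k)) (uhat \<eta> L u k x) (u (Suc k) x)"
  by (simp add: soft_max_def)

declare uhat.simps(2) [simp del]

lemma ex_final_segment:
  fixes q :: nat
  shows "\<exists>k\<le>q. (k = 0 \<or> \<not> Q k) \<and> (\<forall>m\<in>{k+1..q}. Q m)"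
proof (induction q)
  case (Suc q)
  show ?case
  proof (cases "Q (Suc q)")
    case True
    with Suc.IH obtain k where "k \<le> q" "k = 0 \<or> \<not> Q k" "\<forall>m\<in>{k+1..q}. Q m"
      by blast
    with True show ?thesis
      by (intro exI[of _ k]) (auto simp: le_Suc_eq)
  qed auto
qed simp

locale smoothed_max_chain =
  fixes \<eta> :: "real \<Rightarrow> real" and L :: "nat \<Rightarrow> real" and u :: "nat \<Rightarrow> 'a \<Rightarrow> real"
  assumes abs_le_eta: "\<And>t. \<bar>t\<bar> \<le> \<eta> t"
    and eta_le_max: "\<And>t. \<eta> t \<le> max \<bar>t\<bar> (1/2)"
    and eta_eq_abs: "\<And>t. 1/2 \<le> \<bar>t\<bar> \<Longrightarrow> \<eta> t = \<bar>t\<bar>"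
    and L_pos: "\<And>m. 0 < L m"
    and L_Suc_ge: "\<And>m. 2 * L m \<le> L (Suc m)"
begin

abbreviation uh :: "nat \<Rightarrow> 'a \<Rightarrow> real" where
  "uh \<equiv> uhat \<eta> L u"

lemma inverse_L_pos: "0 < inverse (L m)"
  using L_pos by simp

lemma inverse_L_Suc_le: "inverse (L (Suc m)) \<le> inverse (L m) / 2"
proof -
  have "inverse (L (Suc m)) \<le> inverse (2 * L m)"
    using L_pos L_Suc_ge by (intro le_imp_inverse_le) auto
  then show ?thesis
    by simp
qed

lemma inverse_L_antimono: "j \<le> k \<Longrightarrow> inverse (L k) \<le> inverse (L j)"
proof (induction k rule: dec_induct)
  case (step k)
  then show ?case
    using inverse_L_Suc_le[of k] inverse_L_pos[of k] by linarith
qed simp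

lemma max_le_uh_Suc: "max (uh k x) (u (Suc k) x) \<le> uh (Suc k) x"
  unfolding uhat_Suc_soft_max by (rule max_le_soft_max[OF abs_le_eta L_pos])

lemma uh_Suc_le_max: "uh (Suc k) x \<le> max (uh k x) (u (Suc k) x) + inverse (L (Suc k)) / 4"
  unfolding uhat_Suc_soft_max by (rule soft_max_le_max[OF eta_le_max L_pos])

lemma uh_Suc_eq_max:
  "inverse (L (Suc k)) / 2 \<le> \<bar>uh k x - u (Suc k) x\<bar> \<Longrightarrow> uh (Suc k) x = max (uh k x) (u (Suc k) x)"
  unfolding uhat_Suc_soft_max by (rule soft_max_eq_max[OF eta_eq_abs L_pos])

lemma uh_mono: "i \<le> m \<Longrightarrow> uh i x \<le> uh m x"
proof (induction m rule: dec_induct)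
  case (step m)
  then show ?case
    using max_le_uh_Suc[of m x] by linarith
qed simp

lemma u_le_uh:
  assumes "i \<le> m"
  shows "u i x \<le> uh m x"
proof (cases i)
  case 0
  then show ?thesis
    using uh_mono[OF assms] by simp
next
  case (Suc k)
  then show ?thesis
    using max_le_uh_Suc[of k x] uh_mono[OF assms] by (metis max.bounded_iff order_trans)
qed

lemma mem_Pset_Suc_iff: "x \<in> Pset uh u L (Suc k) \<longleftrightarrow> inverse (L (Suc k)) < uh k x - u (Suc k) x"
  by (simp add: Pset_def divide_inverse)

lemma uh_eq_on_Pset_run:
  "k \<le> n \<Longrightarrow> \<forall>m\<in>{k+1..n}. x \<in> Pset uh u L m \<Longrightarrow> uh k x = uh n x"
proof (induction n)
  case (Suc n)
  show ?case
  proof (cases "k = Suc n")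
    case False
    with Suc.prems have "k \<le> n" and "x \<in> Pset uh u L (Suc n)"
      by auto
    then have "inverse (L (Suc n)) < uh n x - u (Suc n) x"
      by (simp only: mem_Pset_Suc_iff)
    then have "uh (Suc n) x = uh n x"
      using uh_Suc_eq_max[of n x] inverse_L_pos[of "Suc n"] by auto
    with Suc \<open>k \<le> n\<close> show ?thesis
      by auto
  qed simp
qed simp

lemma ex_u_ge_if_uh_ge: "-2 * inverse (L m) \<le> uh m x \<Longrightarrow> \<exists>i\<le>m. -3 * inverse (L i) \<le> u i x"
proof (induction m)
  case 0
  then have "-3 * inverse (L 0) \<le> u 0 x"
    using inverse_L_pos[of 0] uhat.simps(1)[of \<eta> L u x] by linarith
  then show ?case
    by blast
next
  case (Suc m)
  show ?case
  proof (cases "-3 * inverse (L (Suc m)) \<le> u (Suc m) x")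
    case False
    have "-9/4 * inverse (L (Suc m)) \<le> max (uh m x) (u (Suc m) x)"
      using Suc.prems uh_Suc_le_max[of m x] by linarith
    with False have "-9/4 * inverse (L (Suc m)) \<le> uh m x"
      using inverse_L_pos[of "Suc m"] by (auto simp: le_max_iff_disj)
    then have "-2 * inverse (L m) \<le> uh m x"
      using inverse_L_Suc_le[of m] inverse_L_pos[of "Suc m"] by linarith
    then show ?thesis
      using Suc.IH le_SucI by blast
  qed blast
qed

lemma in_Eset_or_Gset:
  assumes x: "x \<in> hatSigma uh q" and K: "0 < K" "K \<le> q"
    and P_above: "\<forall>m\<in>{K+1..q}. x \<in> Pset uh u L m"
    and uh_K: "-2 * inverse (L K) \<le> uh (K - 1) x" "uh (K - 1) x \<le> 0"
    and u_K: "-2 * inverse (L K) \<le> u K x" "u K x \<le> 0"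
  shows "\<exists>j<K. x \<in> Eset uh u L q j K \<or> (\<exists>i<j. x \<in> Gset uh u L q i j K)"
proof -
  obtain j where "j \<le> K - 1" and j: "j = 0 \<or> x \<notin> Pset uh u L j"
    and P_between: "\<forall>m\<in>{j+1..K-1}. x \<in> Pset uh u L m"
    using ex_final_segment[of "K - 1" "\<lambda>m. x \<in> Pset uh u L m"] by blast
  have "uh j x = uh (K - 1) x"
    using \<open>j \<le> K - 1\<close> P_between by (rule uh_eq_on_Pset_run)
  with uh_K have uh_j: "-2 * inverse (L K) \<le> uh j x" "uh j x \<le> 0"
    by simp_all
  have "j < K"
    using \<open>j \<le> K - 1\<close> K by simp
  note memberships = x P_above P_between uh_K u_K
  consider "j = 0"
    | j' where "j = Suc j'" "uh j' x - u j x < - inverse (L j)"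
    | j' where "j = Suc j'" "\<bar>uh j' x - u j x\<bar> \<le> inverse (L j)"
    using j by (cases j) (force simp: mem_Pset_Suc_iff abs_le_iff not_less)+
  then show ?thesis
  proof cases
    case 1
    then have "x \<in> Eset uh u L q j K"
      using memberships uh_j by (simp add: Eset_def divide_inverse)
    with \<open>j < K\<close> show ?thesis
      by blast
  next
    case (2 j')
    then have "inverse (L j) / 2 \<le> \<bar>uh j' x - u j x\<bar>"
      using inverse_L_pos[of j] by linarith
    moreover have "uh j' x < u j x"
      using 2 inverse_L_pos[of j] by linarith
    ultimately have "uh j x = u j x"
      using uh_Suc_eq_max[of j' x] 2(1) by simp
    then have "x \<in> Eset uh u L q j K"
      using 2 memberships uh_j by (simp add: Eset_def divide_inverse)
    with \<open>j < K\<close> show ?thesis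
      by blast
  next
    case (3 j')
    have "inverse (L K) \<le> inverse (L j)"
      using \<open>j < K\<close> by (simp add: inverse_L_antimono)
    then have max_ge: "-9/4 * inverse (L j) \<le> max (uh j' x) (u j x)"
      using uh_Suc_le_max[of j' x] uh_j 3(1) by simp
    have "max (uh j' x) (u j x) \<le> 0"
      using max_le_uh_Suc[of j' x] uh_j 3(1) by simp
    with max_ge 3(2) have u_j: "-4 * inverse (L j) \<le> u j x" "u j x \<le> 0"
      and "-13/4 * inverse (L j) \<le> uh j' x"
      using inverse_L_pos[of j] by (auto simp: max_def split: if_splits)
    then have "-2 * inverse (L j') \<le> uh j' x"
      using inverse_L_Suc_le[of j'] inverse_L_pos[of j] 3(1) by simp
    then obtain i where "i \<le> j'" and u_i_ge: "-3 * inverse (L i) \<le> u i x"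
      using ex_u_ge_if_uh_ge by blast
    have "u i x \<le> uh j x"
      using \<open>i \<le> j'\<close> 3(1) by (intro u_le_uh) simp
    then have "x \<in> Gset uh u L q i j K"
      using memberships u_j u_i_ge uh_j inverse_L_pos[of i] by (simp add: Gset_def divide_inverse)
    with \<open>i \<le> j'\<close> 3(1) \<open>j < K\<close> show ?thesis
      by (intro exI[of _ j]) auto
  qed
qed

lemma hatSigma_covered:
  assumes x: "x \<in> hatSigma uh q"
  shows "(\<exists>k\<le>q. x \<in> Fset uh u L q k)
    \<or> (\<exists>k\<le>q. \<exists>j<k. x \<in> Eset uh u L q j k \<or> (\<exists>i<j. x \<in> Gset uh u L q i j k))"
proof -
  obtain k where "k \<le> q" and k: "k = 0 \<or> x \<notin> Pset uh u L k"
    and P_above: "\<forall>m\<in>{k+1..q}. x \<in> Pset uh u L m"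
    using ex_final_segment[of q "\<lambda>m. x \<in> Pset uh u L m"] by blast
  have "uh k x = uh q x"
    using \<open>k \<le> q\<close> P_above by (rule uh_eq_on_Pset_run)
  with x have uh_k: "uh k x = 0"
    by (simp add: hatSigma_def)
  consider "k = 0"
    | k' where "k = Suc k'" "uh k' x - u k x < - inverse (L k)"
    | k' where "k = Suc k'" "\<bar>uh k' x - u k x\<bar> \<le> inverse (L k)"
    using k by (cases k) (force simp: mem_Pset_Suc_iff abs_le_iff not_less)+
  then show ?thesis
  proof cases
    case 1
    then have "x \<in> Fset uh u L q k"
      using x P_above by (simp add: Fset_def)
    with \<open>k \<le> q\<close> show ?thesis
      by blast
  next
    case (2 k')
    then have "x \<in> Fset uh u L q k"
      using x P_above by (simp add: Fset_def divide_inverse)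
    with \<open>k \<le> q\<close> show ?thesis
      by blast
  next
    case (3 k')
    have "- inverse (L k) / 4 \<le> max (uh k' x) (u k x)" "max (uh k' x) (u k x) \<le> 0"
      using uh_Suc_le_max[of k' x] max_le_uh_Suc[of k' x] uh_k 3(1) by simp_all
    with 3 have "-2 * inverse (L k) \<le> uh (k - 1) x" "uh (k - 1) x \<le> 0"
      "-2 * inverse (L k) \<le> u k x" "u k x \<le> 0"
      using inverse_L_pos[of k] by (auto simp: max_def split: if_splits)
    then show ?thesis
      using in_Eset_or_Gset[OF x _ \<open>k \<le> q\<close> P_above] 3(1) \<open>k \<le> q\<close> by blast
  qed
qed

end

lemma lam_pos: "0 < \<gamma> \<Longrightarrow> 0 < lam0 \<Longrightarrow> 0 < lam \<gamma> lam0 m"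
  by (simp add: lam_def)

lemma lam_Suc_ge:
  assumes "0 < \<gamma>" "\<gamma> \<le> 1/2" "0 < lam0"
  shows "2 * lam \<gamma> lam0 m \<le> lam \<gamma> lam0 (Suc m)"
proof -
  have "2 * lam \<gamma> lam0 m \<le> lam \<gamma> lam0 m / \<gamma>"
    using assms lam_pos[of \<gamma> lam0 m] by (simp add: pos_le_divide_eq)
  also have "\<dots> = lam \<gamma> lam0 (Suc m)"
    by (simp add: lam_def mult.commute)
  finally show ?thesis .
qed

theorem proposition2p17:
  fixes u :: "nat \<Rightarrow> real ^ 'n \<Rightarrow> real" and q :: nat
    and \<eta> :: "real \<Rightarrow> real" and \<gamma> lam0 :: real
  assumes dim: "CARD('n) \<ge> 3"
    and affine_u: "\<forall>m\<le>q. \<exists>a b. a \<noteq> 0 \<and> u m = (\<lambda>x. a \<bullet> x + b)"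
    and Omega_compact: "compact {x. \<forall>m\<le>q. u m x \<le> 0}"
    and Omega_interior: "interior {x. \<forall>m\<le>q. u m x \<le> 0} \<noteq> {}"
    and eta_smooth: "smooth_real \<eta>"
    and eta_even: "\<forall>t. \<eta> (- t) = \<eta> t"
    and eta_abs: "\<forall>t. \<bar>t\<bar> \<ge> 1/2 \<longrightarrow> \<eta> t = \<bar>t\<bar>"
    and eta_convex: "\<forall>t. (deriv ^^ 2) \<eta> t \<ge> 0"
    and gamma: "0 < \<gamma>" "\<gamma> < 1/2"
    and lambda0: "lam0 > 1"
  shows "hatSigma (uhat \<eta> (lam \<gamma> lam0) u) q =
           (\<Union>k\<in>{0..q}. Fset (uhat \<eta> (lam \<gamma> lam0) u) u (lam \<gamma> lam0) q k)
         \<union> (\<Union>k\<in>{0..q}. \<Union>j\<in>{0..<k}. Eset (uhat \<eta> (lam \<gamma> lam0) u) u (lam \<gamma> lam0) q j k)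
         \<union> (\<Union>k\<in>{0..q}. \<Union>j\<in>{0..<k}. \<Union>i\<in>{0..<j}.
               Gset (uhat \<eta> (lam \<gamma> lam0) u) u (lam \<gamma> lam0) q i j k)"
    (is "_ = ?R")
proof -
  have eta_convex_on: "convex_on UNIV \<eta>"
    using eta_smooth eta_convex by (intro smooth_real_convex_on) auto
  have abs_outside: "\<And>t. 1/2 \<le> \<bar>t\<bar> \<Longrightarrow> \<eta> t = \<bar>t\<bar>"
    using eta_abs by blast
  interpret smoothed_max_chain \<eta> "lam \<gamma> lam0" u
    using convex_eq_abs_outside_ge_abs[OF eta_convex_on abs_outside]
      convex_eq_abs_outside_le_max[OF eta_convex_on abs_outside]
      lam_pos lam_Suc_ge gamma lambda0 abs_outside
    by unfold_locales auto
  have "hatSigma uh q \<subseteq> ?R"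
    using hatSigma_covered by fastforce
  moreover have "?R \<subseteq> hatSigma uh q"
    by (auto simp: Fset_def Eset_def Gset_def split: if_splits)
  ultimately show ?thesis
    by blast
qed

end
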